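(* Let $f\in C^1_c(\mathbb{R})$ be real-valued. For every $\varepsilon>0$ there exist $N\in\mathbb{N}$, $c_1,\dots,c_N\in\mathbb{R}$ and $\eta_1,\dots,\eta_N\in\mathbb{C}$ with $\operatorname{Im}\eta_j>0$ such that $$\left\|f-\sum_{j=1}^Nc_j\operatorname{Im}\frac{1}{\cdot-\eta_j}\right\|_{\mathcal{L}_w}<\varepsilon.$$
   Context: $\mathcal{L}_w$ is the space of functions $f:\mathbb{R}\to\mathbb{R}$ with $\lim_{x\to-\infty}f(x)=0$ and $\|f\|_{\mathcal{L}_w}:=\sup_{x\ne y}\sqrt{1+x^2}\sqrt{1+y^2}\left|\frac{f(x)-f(y)}{x-y}\right|<\infty$; it is a normed space with this norm. Here $\operatorname{Im}\frac{1}{\cdot-\eta}$ denotes the function $x\mapsto\operatorname{Im}\frac{1}{x-\eta}$. *)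

theory Defs
  imports "HOL-Analysis.Analysis"
begin

text \<open>The weighted Lipschitz seminorm of the space L_w, valued in extended reals
  (so that finiteness is part of any strict bound).\<close>
definition Lw_norm :: "(real \<Rightarrow> real) \<Rightarrow> ereal" where
  "Lw_norm f = (SUP p \<in> {(x, y). x \<noteq> (y::real)}.
      ereal (sqrt (1 + (fst p)\<^sup>2) * sqrt (1 + (snd p)\<^sup>2) *
             \<bar>(f (fst p) - f (snd p)) / (fst p - snd p)\<bar>))"

definition C1c :: "(real \<Rightarrow> real) \<Rightarrow> bool" where
  "C1c f \<longleftrightarrow> f C1_differentiable_on UNIV \<and> compact (closure {x. f x \<noteq> 0})"

end

theory Submission
  imports Defs "HOL-Real_Asymp.Real_Asymp"
begin

text \<open>If \<open>\<Phi> = (1 + x\<^sup>2) h\<close> and \<open>(1 + x\<^sup>2) \<Phi>'\<close> are bounded by \<open>\<delta>\<close>, then the \<open>L_w\<close> norm of \<open>h\<close>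
  is at most \<open>4\<delta>\<close> (estimate difference quotients in the variable \<open>arctan x\<close>). Through the Cayley
  transform \<open>x \<mapsto> (1 + i x) / (1 - i x)\<close> these are \<open>C\<^sup>1\<close> bounds on the unit circle, so it suffices to
  approximate \<open>(1 + x\<^sup>2) f\<close> in \<open>C\<^sup>1\<close> on the circle by \<open>(1 + x\<^sup>2) \<Sum> c\<^sub>j Im (1 / (x - \<eta>\<^sub>j))\<close>.
  Approximating the derivative by a trigonometric polynomial (Stone-Weierstrass) and integrating
  shows that \<open>(1 + x\<^sup>2) f\<close> is \<open>C\<^sup>1\<close>-close to a trigonometric polynomial; the constant lost in the
  integration is small because \<open>f\<close> has compact support. Finally \<open>(1 + x\<^sup>2) Im (1 / (x - \<eta>))\<close> is the
  Poisson kernel \<open>2 Re (1 / (1 - q w)) - 1\<close> with \<open>\<bar>q\<bar> < 1\<close>, and averaging such kernels with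
  \<open>q = t \<omega>\<^sup>j\<close> over the \<open>(2m+1)\<close>-st roots of unity \<open>\<omega>\<close> reproduces \<open>Re (a w\<^sup>m)\<close> up to \<open>O(t)\<close>.\<close>

section \<open>Difference quotients measured in \<open>arctan\<close>\<close>

lemma one_add_square_pos: "0 < 1 + x\<^sup>2" for x :: real
  by (simp add: add_pos_nonneg)

lemma half_le_sin:
  fixes t :: real assumes "0 \<le> t" "t \<le> pi/2" shows "t/2 \<le> sin t"
proof (cases "t \<le> pi/3")
  case True
  let ?f = "\<lambda>x. sin x - x/2"
  have "?f 0 \<le> ?f t"
  proof (rule DERIV_nonneg_imp_nondecreasing[OF assms(1)])
    fix u assume u: "0 \<le> u" "u \<le> t"
    have "cos (pi/3) \<le> cos u"
      using u True by (intro cos_monotone_0_pi_le) auto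
    hence "1/2 \<le> cos u" by (simp add: cos_60)
    thus "\<exists>y. (?f has_real_derivative y) (at u) \<and> 0 \<le> y"
      by (intro exI[of _ "cos u - 1/2"]) (auto intro!: derivative_eq_intros)
  qed
  thus ?thesis by simp
next
  case False
  have "sin (pi/3) \<le> sin t"
    using False assms by (intro sin_monotone_2pi_le) auto
  moreover have "sin (pi/3) = sqrt 3 / 2" by (simp add: sin_60)
  moreover have "pi/4 \<le> sqrt 3 / 2"
  proof -
    have "pi \<le> 3.2" using pi_approx by simp
    moreover have "1.6 \<le> sqrt 3" by (rule real_le_rsqrt) (simp add: power2_eq_square)
    ultimately show ?thesis by linarith
  qed
  ultimately show ?thesis using assms by linarith
qed

lemma min_le_two_sin:
  fixes t :: real assumes "0 \<le> t" "t \<le> pi" shows "min t (pi - t) \<le> 2 * sin t"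
proof (cases "t \<le> pi/2")
  case True thus ?thesis using half_le_sin[of t] assms by simp
next
  case False
  have "(pi - t)/2 \<le> sin (pi - t)" using False assms by (intro half_le_sin) auto
  thus ?thesis by simp
qed

lemma sin_arctan_diff:
  "sin (arctan y - arctan x) = (y - x) / (sqrt (1 + x\<^sup>2) * sqrt (1 + y\<^sup>2))"
  by (simp add: sin_diff sin_arctan cos_arctan diff_divide_distrib mult.commute)

lemma abs_diff_le_arctan_diff:
  fixes \<phi> \<phi>' :: "real \<Rightarrow> real"
  assumes d: "\<And>x. (\<phi> has_real_derivative \<phi>' x) (at x)"
    and b: "\<And>x. (1 + x\<^sup>2) * \<bar>\<phi>' x\<bar> \<le> M" and xy: "x \<le> y"
  shows "\<bar>\<phi> y - \<phi> x\<bar> \<le> M * (arctan y - arctan x)"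
proof -
  have b': "\<bar>\<phi>' t\<bar> \<le> M / (1 + t\<^sup>2)" for t
    using b[of t] one_add_square_pos[of t] by (simp add: field_simps)
  have up: "M * arctan x - \<phi> x \<le> M * arctan y - \<phi> y"
  proof (rule DERIV_nonneg_imp_nondecreasing[OF xy, where f = "\<lambda>t. M * arctan t - \<phi> t"])
    fix u show "\<exists>z. ((\<lambda>t. M * arctan t - \<phi> t) has_real_derivative z) (at u) \<and> 0 \<le> z"
      using b'[of u] d[of u]
      by (intro exI[of _ "M / (1 + u\<^sup>2) - \<phi>' u"]) (auto intro!: derivative_eq_intros simp: field_simps)
  qed
  have down: "M * arctan x + \<phi> x \<le> M * arctan y + \<phi> y"
  proof (rule DERIV_nonneg_imp_nondecreasing[OF xy, where f = "\<lambda>t. M * arctan t + \<phi> t"])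
    fix u show "\<exists>z. ((\<lambda>t. M * arctan t + \<phi> t) has_real_derivative z) (at u) \<and> 0 \<le> z"
      using b'[of u] d[of u]
      by (intro exI[of _ "M / (1 + u\<^sup>2) + \<phi>' u"]) (auto intro!: derivative_eq_intros simp: field_simps)
  qed
  from up down show ?thesis by (simp add: algebra_simps abs_le_iff)
qed

lemma abs_le_arctan_tail_at_top:
  fixes \<phi> \<phi>' :: "real \<Rightarrow> real"
  assumes d: "\<And>x. (\<phi> has_real_derivative \<phi>' x) (at x)"
    and b: "\<And>x. (1 + x\<^sup>2) * \<bar>\<phi>' x\<bar> \<le> M" and l: "(\<phi> \<longlongrightarrow> 0) at_top"
  shows "\<bar>\<phi> x\<bar> \<le> M * (pi/2 - arctan x)"
proof -
  have "((\<lambda>y. \<bar>\<phi> y - \<phi> x\<bar>) \<longlongrightarrow> \<bar>0 - \<phi> x\<bar>) at_top"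
    by (intro tendsto_intros l)
  moreover have "((\<lambda>y. M * (arctan y - arctan x)) \<longlongrightarrow> M * (pi/2 - arctan x)) at_top"
    by (intro tendsto_intros tendsto_arctan_at_top)
  moreover have "eventually (\<lambda>y. \<bar>\<phi> y - \<phi> x\<bar> \<le> M * (arctan y - arctan x)) at_top"
    using eventually_ge_at_top[of x] by eventually_elim (rule abs_diff_le_arctan_diff[OF d b])
  ultimately have "\<bar>0 - \<phi> x\<bar> \<le> M * (pi/2 - arctan x)" by (intro tendsto_le[of at_top]) auto
  thus ?thesis by simp
qed

lemma abs_le_arctan_tail_at_bot:
  fixes \<phi> \<phi>' :: "real \<Rightarrow> real"
  assumes d: "\<And>x. (\<phi> has_real_derivative \<phi>' x) (at x)"
    and b: "\<And>x. (1 + x\<^sup>2) * \<bar>\<phi>' x\<bar> \<le> M" and l: "(\<phi> \<longlongrightarrow> 0) at_bot"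
  shows "\<bar>\<phi> x\<bar> \<le> M * (arctan x + pi/2)"
proof -
  have "((\<lambda>y. \<bar>\<phi> x - \<phi> y\<bar>) \<longlongrightarrow> \<bar>\<phi> x - 0\<bar>) at_bot"
    by (intro tendsto_intros l)
  moreover have "((\<lambda>y. M * (arctan x - arctan y)) \<longlongrightarrow> M * (arctan x - - (pi/2))) at_bot"
    by (intro tendsto_intros tendsto_arctan_at_bot)
  moreover have "eventually (\<lambda>y. \<bar>\<phi> x - \<phi> y\<bar> \<le> M * (arctan x - arctan y)) at_bot"
    using eventually_le_at_bot[of x] by eventually_elim (rule abs_diff_le_arctan_diff[OF d b])
  ultimately have "\<bar>\<phi> x - 0\<bar> \<le> M * (arctan x - - (pi/2))" by (intro tendsto_le[of at_bot]) auto
  thus ?thesis by simp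
qed

text \<open>With \<open>t = arctan y - arctan x\<close> the increment is at most \<open>M t\<close> directly and at most
  \<open>M (\<pi> - t)\<close> through the two tails; then \<open>min t (\<pi> - t) \<le> 2 sin t\<close>, and \<open>sin t\<close> is \<open>y - x\<close>
  divided by the weight of the \<open>L_w\<close> norm.\<close>
lemma weighted_diff_quotient_le:
  fixes h h' :: "real \<Rightarrow> real"
  assumes d: "\<And>x. (h has_real_derivative h' x) (at x)"
    and b: "\<And>x. (1 + x\<^sup>2) * \<bar>h' x\<bar> \<le> M"
    and lt: "(h \<longlongrightarrow> 0) at_top" and lb: "(h \<longlongrightarrow> 0) at_bot" and xy: "x < y"
  shows "sqrt (1 + x\<^sup>2) * sqrt (1 + y\<^sup>2) * \<bar>(h x - h y) / (x - y)\<bar> \<le> 2 * M"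
proof -
  have M0: "0 \<le> M" using b[of 0] abs_ge_zero[of "h' 0"] by simp
  define t where "t = arctan y - arctan x"
  define Q where "Q = sqrt (1 + x\<^sup>2) * sqrt (1 + y\<^sup>2)"
  have t0: "0 \<le> t" using xy arctan_le_iff[of x y] unfolding t_def by linarith
  have tpi: "t \<le> pi" using arctan_lbound[of x] arctan_ubound[of y] unfolding t_def by linarith
  have Q: "0 < Q" by (simp add: Q_def add_pos_nonneg)
  have yx: "0 < y - x" using xy by simp
  have near: "\<bar>h y - h x\<bar> \<le> M * t"
    unfolding t_def using abs_diff_le_arctan_diff[OF d b] xy by simp
  have "\<bar>h y - h x\<bar> \<le> M * (pi/2 - arctan y) + M * (arctan x + pi/2)"
    using abs_le_arctan_tail_at_top[OF d b lt, of y] abs_le_arctan_tail_at_bot[OF d b lb, of x]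
    by linarith
  hence far: "\<bar>h y - h x\<bar> \<le> M * (pi - t)" by (simp add: t_def algebra_simps)
  have "\<bar>h y - h x\<bar> \<le> M * min t (pi - t)" using near far by (simp add: min_def)
  also have "\<dots> \<le> M * (2 * sin t)" using min_le_two_sin[OF t0 tpi] M0 by (rule mult_left_mono)
  finally have inc: "\<bar>h y - h x\<bar> \<le> 2 * M * ((y - x) / Q)"
    by (simp add: t_def Q_def sin_arctan_diff algebra_simps)
  have "Q * \<bar>(h x - h y) / (x - y)\<bar> = \<bar>h y - h x\<bar> * (Q / (y - x))"
    using yx by (simp add: abs_minus_commute abs_divide)
  also have "\<dots> \<le> 2 * M * ((y - x) / Q) * (Q / (y - x))"
    using inc Q yx by (intro mult_right_mono) auto
  also have "\<dots> = 2 * M" using Q yx by simp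
  finally show ?thesis by (simp add: Q_def)
qed

lemma Lw_norm_le_if_weighted_deriv_le:
  fixes h h' :: "real \<Rightarrow> real"
  assumes d: "\<And>x. (h has_real_derivative h' x) (at x)"
    and b: "\<And>x. (1 + x\<^sup>2) * \<bar>h' x\<bar> \<le> M"
    and lt: "(h \<longlongrightarrow> 0) at_top" and lb: "(h \<longlongrightarrow> 0) at_bot"
  shows "Lw_norm h \<le> ereal (2 * M)"
  unfolding Lw_norm_def
proof (rule SUP_least, clarify)
  fix x y :: real assume "x \<noteq> y"
  then consider "x < y" | "y < x" by linarith
  thus "ereal (sqrt (1 + (fst (x, y))\<^sup>2) * sqrt (1 + (snd (x, y))\<^sup>2) *
          \<bar>(h (fst (x, y)) - h (snd (x, y))) / (fst (x, y) - snd (x, y))\<bar>) \<le> ereal (2 * M)"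
  proof cases
    case 1 thus ?thesis using weighted_diff_quotient_le[OF d b lt lb] by simp
  next
    case 2
    have "(h x - h y) / (x - y) = (h y - h x) / (y - x)"
      by (metis minus_diff_eq minus_divide_divide)
    thus ?thesis using weighted_diff_quotient_le[OF d b lt lb 2] by (simp add: mult.commute)
  qed
qed

text \<open>Apply \<open>abs_diff_le_arctan_diff\<close> to \<open>\<phi> - c arctan\<close> between \<open>-y\<close> and \<open>y\<close> and let \<open>y \<rightarrow> \<infinity>\<close>:
  this gives \<open>\<bar>c\<bar> \<pi> \<le> e \<pi>\<close>.\<close>
lemma abs_le_if_weighted_deriv_near:
  fixes \<phi> \<phi>' :: "real \<Rightarrow> real"
  assumes d: "\<And>x. (\<phi> has_real_derivative \<phi>' x) (at x)"
    and b: "\<And>x. \<bar>(1 + x\<^sup>2) * \<phi>' x - c\<bar> \<le> e"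
    and lt: "(\<phi> \<longlongrightarrow> 0) at_top" and lb: "(\<phi> \<longlongrightarrow> 0) at_bot"
  shows "\<bar>c\<bar> \<le> e"
proof -
  define \<psi> where "\<psi> = (\<lambda>x. \<phi> x - c * arctan x)"
  have d\<psi>: "(\<psi> has_real_derivative \<phi>' x - c / (1 + x\<^sup>2)) (at x)" for x
    unfolding \<psi>_def using d[of x] by (auto intro!: derivative_eq_intros simp: divide_inverse)
  have b\<psi>: "(1 + x\<^sup>2) * \<bar>\<phi>' x - c / (1 + x\<^sup>2)\<bar> \<le> e" for x
  proof -
    have "(1 + x\<^sup>2) * \<bar>\<phi>' x - c / (1 + x\<^sup>2)\<bar> = \<bar>(1 + x\<^sup>2) * (\<phi>' x - c / (1 + x\<^sup>2))\<bar>"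
      using one_add_square_pos[of x] by (simp add: abs_mult)
    also have "\<dots> = \<bar>(1 + x\<^sup>2) * \<phi>' x - c\<bar>"
      using one_add_square_pos[of x] by (simp add: right_diff_distrib)
    finally show ?thesis using b[of x] by simp
  qed
  have lim: "((\<lambda>y. \<bar>\<phi> y - \<phi> (-y) - 2 * c * arctan y\<bar>) \<longlongrightarrow> \<bar>0 - 0 - 2 * c * (pi/2)\<bar>) at_top"
    by (intro tendsto_intros lt filterlim_compose[OF lb filterlim_uminus_at_bot_at_top]
        tendsto_arctan_at_top)
  have lim': "((\<lambda>y. e * (2 * arctan y)) \<longlongrightarrow> e * (2 * (pi/2))) at_top"
    by (intro tendsto_intros tendsto_arctan_at_top)
  have ev: "eventually (\<lambda>y. \<bar>\<phi> y - \<phi> (-y) - 2 * c * arctan y\<bar> \<le> e * (2 * arctan y)) at_top"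
    using eventually_ge_at_top[of 0]
  proof eventually_elim
    case (elim y)
    have "\<bar>\<psi> y - \<psi> (-y)\<bar> \<le> e * (arctan y - arctan (-y))"
      by (rule abs_diff_le_arctan_diff[OF d\<psi> b\<psi>]) (use elim in simp)
    thus ?case by (simp add: \<psi>_def arctan_minus algebra_simps)
  qed
  have "\<bar>0 - 0 - 2 * c * (pi/2)\<bar> \<le> e * (2 * (pi/2))"
    by (rule tendsto_le[OF trivial_limit_at_top_linorder lim' lim ev])
  hence "\<bar>c\<bar> * pi \<le> e * pi" by (simp add: abs_mult)
  thus ?thesis using pi_gt_zero by simp
qed

section \<open>Weighted \<open>C\<^sup>1\<close> bounds\<close>

text \<open>Under the Cayley transform below, \<open>(1 + x\<^sup>2) \<phi>'\<close> is twice the derivative of \<open>\<phi>\<close> in the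
  angle on the unit circle, so \<open>wC1_bounded\<close> is a \<open>C\<^sup>1\<close> bound on the circle.\<close>
definition wC1_bounded :: "real \<Rightarrow> (real \<Rightarrow> real) \<Rightarrow> bool" where
  "wC1_bounded \<delta> \<phi> \<longleftrightarrow> (\<exists>\<phi>'. (\<forall>x. (\<phi> has_real_derivative \<phi>' x) (at x)) \<and>
      (\<forall>x. \<bar>\<phi> x\<bar> \<le> \<delta> \<and> (1 + x\<^sup>2) * \<bar>\<phi>' x\<bar> \<le> \<delta>))"

lemma wC1_bounded_add:
  assumes "wC1_bounded d1 f" "wC1_bounded d2 g"
  shows "wC1_bounded (d1 + d2) (\<lambda>x. f x + g x)"
proof -
  obtain f' where f: "\<And>x. (f has_real_derivative f' x) (at x)"
    "\<And>x. \<bar>f x\<bar> \<le> d1" "\<And>x. (1 + x\<^sup>2) * \<bar>f' x\<bar> \<le> d1"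
    using assms(1) unfolding wC1_bounded_def by blast
  obtain g' where g: "\<And>x. (g has_real_derivative g' x) (at x)"
    "\<And>x. \<bar>g x\<bar> \<le> d2" "\<And>x. (1 + x\<^sup>2) * \<bar>g' x\<bar> \<le> d2"
    using assms(2) unfolding wC1_bounded_def by blast
  show ?thesis unfolding wC1_bounded_def
  proof (intro exI[of _ "\<lambda>x. f' x + g' x"] conjI allI)
    fix x
    show "((\<lambda>x. f x + g x) has_real_derivative f' x + g' x) (at x)" by (rule DERIV_add[OF f(1) g(1)])
    show "\<bar>f x + g x\<bar> \<le> d1 + d2" using f(2)[of x] g(2)[of x] by linarith
    have "(1 + x\<^sup>2) * \<bar>f' x + g' x\<bar> \<le> (1 + x\<^sup>2) * (\<bar>f' x\<bar> + \<bar>g' x\<bar>)"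
      using one_add_square_pos[of x] by (intro mult_left_mono) auto
    thus "(1 + x\<^sup>2) * \<bar>f' x + g' x\<bar> \<le> d1 + d2" using f(3)[of x] g(3)[of x] by (simp add: distrib_left)
  qed
qed

lemma wC1_bounded_mono: "wC1_bounded d f \<Longrightarrow> d \<le> d' \<Longrightarrow> wC1_bounded d' f"
  unfolding wC1_bounded_def by (meson order_trans)

lemma wC1_bounded_zero: "0 \<le> d \<Longrightarrow> wC1_bounded d (\<lambda>x. 0)"
  unfolding wC1_bounded_def by (intro exI[of _ "\<lambda>x. 0"]) auto

lemma wC1_bounded_cong: "wC1_bounded d f \<Longrightarrow> (\<And>x. g x = f x) \<Longrightarrow> wC1_bounded d g"
  by (metis ext)

lemma wC1_bounded_if_weighted_deriv_le:
  fixes \<phi> \<phi>' :: "real \<Rightarrow> real"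
  assumes d: "\<And>x. (\<phi> has_real_derivative \<phi>' x) (at x)"
    and b: "\<And>x. (1 + x\<^sup>2) * \<bar>\<phi>' x\<bar> \<le> M" and l: "(\<phi> \<longlongrightarrow> 0) at_top"
  shows "wC1_bounded (4 * M) \<phi>"
  unfolding wC1_bounded_def
proof (intro exI conjI allI)
  fix x
  have M: "0 \<le> M" using b[of 0] abs_ge_zero[of "\<phi>' 0"] by simp
  show "(\<phi> has_real_derivative \<phi>' x) (at x)" by (rule d)
  have "\<bar>\<phi> x\<bar> \<le> M * (pi/2 - arctan x)" by (rule abs_le_arctan_tail_at_top[OF d b l])
  also have "\<dots> \<le> M * 4" using arctan_lbound[of x] pi_less_4 M by (intro mult_left_mono) auto
  finally show "\<bar>\<phi> x\<bar> \<le> 4 * M" by simp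
  show "(1 + x\<^sup>2) * \<bar>\<phi>' x\<bar> \<le> 4 * M" using b[of x] M by linarith
qed

lemma abs_two_mult_div_one_add_square_le: "\<bar>2 * x / (1 + x\<^sup>2)\<bar> \<le> 1" for x :: real
  using sum_squares_bound[of 1 "\<bar>x\<bar>"] one_add_square_pos[of x]
  by (simp add: abs_divide abs_mult power2_eq_square)

lemma Lw_norm_le_if_wC1_bounded_weighted:
  assumes "wC1_bounded \<delta> (\<lambda>x. (1 + x\<^sup>2) * h x)"
  shows "Lw_norm h \<le> ereal (4 * \<delta>)"
proof -
  define \<Phi> where "\<Phi> = (\<lambda>x. (1 + x\<^sup>2) * h x)"
  obtain \<Phi>' where d\<Phi>: "\<And>x. (\<Phi> has_real_derivative \<Phi>' x) (at x)"
    and b\<Phi>: "\<And>x. \<bar>\<Phi> x\<bar> \<le> \<delta>" and b\<Phi>': "\<And>x. (1 + x\<^sup>2) * \<bar>\<Phi>' x\<bar> \<le> \<delta>"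
    using assms unfolding wC1_bounded_def \<Phi>_def by blast
  have "h x = \<Phi> x / (1 + x\<^sup>2)" for x
    using one_add_square_pos[of x] by (simp add: \<Phi>_def)
  hence h\<Phi>: "h = (\<lambda>x. \<Phi> x / (1 + x\<^sup>2))" by (rule ext)
  define h' where "h' = (\<lambda>x. (\<Phi>' x - \<Phi> x * (2 * x / (1 + x\<^sup>2))) / (1 + x\<^sup>2))"
  have dh: "(h has_real_derivative h' x) (at x)" for x
  proof -
    have "((\<lambda>x. \<Phi> x / (1 + x\<^sup>2)) has_real_derivative
            (\<Phi>' x * (1 + x\<^sup>2) - \<Phi> x * (2 * x)) / ((1 + x\<^sup>2) * (1 + x\<^sup>2))) (at x)"
      using d\<Phi>[of x] one_add_square_pos[of x] by (auto intro!: derivative_eq_intros)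
    thus ?thesis
      unfolding h\<Phi> h'_def using one_add_square_pos[of x] by (simp add: field_simps)
  qed
  have bh: "(1 + x\<^sup>2) * \<bar>h' x\<bar> \<le> 2 * \<delta>" for x
  proof -
    have p: "0 < 1 + x\<^sup>2" by (rule one_add_square_pos)
    have "\<bar>\<Phi>' x\<bar> \<le> \<delta>"
      using b\<Phi>'[of x] p mult_le_cancel_right1[of "\<bar>\<Phi>' x\<bar>" "1 + x\<^sup>2"] by (simp add: mult.commute)
    moreover have "\<bar>\<Phi> x\<bar> * \<bar>2 * x / (1 + x\<^sup>2)\<bar> \<le> \<delta> * 1"
      using b\<Phi>[of x] abs_two_mult_div_one_add_square_le[of x] by (intro mult_mono) auto
    moreover have "(1 + x\<^sup>2) * \<bar>h' x\<bar> = \<bar>\<Phi>' x - \<Phi> x * (2 * x / (1 + x\<^sup>2))\<bar>"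
      unfolding h'_def using p by (simp add: abs_divide)
    ultimately show ?thesis
      using abs_triangle_ineq4[of "\<Phi>' x" "\<Phi> x * (2 * x / (1 + x\<^sup>2))"] by (simp add: abs_mult)
  qed
  have hb: "norm (h x) \<le> \<delta> / (1 + x\<^sup>2)" for x
    using b\<Phi>[of x] one_add_square_pos[of x] by (simp add: h\<Phi> abs_divide divide_right_mono)
  have lt: "(h \<longlongrightarrow> 0) at_top"
    by (rule Lim_null_comparison[OF always_eventually[OF allI[OF hb]]]) real_asymp
  have lb: "(h \<longlongrightarrow> 0) at_bot"
    by (rule Lim_null_comparison[OF always_eventually[OF allI[OF hb]]]) real_asymp
  have "Lw_norm h \<le> ereal (2 * (2 * \<delta>))" by (rule Lw_norm_le_if_weighted_deriv_le[OF dh bh lt lb])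
  thus ?thesis by simp
qed

section \<open>The Cayley transform\<close>

definition cayley :: "real \<Rightarrow> complex" where
  "cayley x = (1 + \<i> * of_real x) / (1 - \<i> * of_real x)"

definition cayley_inv :: "complex \<Rightarrow> real" where
  "cayley_inv w = Im w / (1 + Re w)"

lemma one_minus_i_real_nonzero: "1 - \<i> * complex_of_real x \<noteq> 0"
  by (simp add: complex_eq_iff)

lemma one_plus_i_real_nonzero: "1 + \<i> * complex_of_real x \<noteq> 0"
  by (simp add: complex_eq_iff)

lemma Re_cayley: "Re (cayley x) = (1 - x\<^sup>2) / (1 + x\<^sup>2)"
  by (simp add: cayley_def Re_divide power2_eq_square)

lemma Im_cayley: "Im (cayley x) = 2 * x / (1 + x\<^sup>2)"
  by (simp add: cayley_def Im_divide power2_eq_square)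

lemma norm_cayley [simp]: "cmod (cayley x) = 1"
proof -
  have "cmod (1 + \<i> * complex_of_real x) = cmod (1 - \<i> * complex_of_real x)"
    by (simp add: cmod_def)
  thus ?thesis using one_minus_i_real_nonzero[of x] by (simp add: cayley_def norm_divide)
qed

lemma cayley_neq_minus_one: "cayley x \<noteq> -1"
proof
  assume "cayley x = -1"
  hence "Re (cayley x) = -1" by simp
  thus False using one_add_square_pos[of x] by (simp add: Re_cayley field_simps)
qed

lemma cayley_inv_cayley [simp]: "cayley_inv (cayley x) = x"
  using one_add_square_pos[of x]
  by (simp add: cayley_inv_def Re_cayley Im_cayley field_simps power2_eq_square)

lemma cayley_tendsto_at_top: "(cayley \<longlongrightarrow> -1) at_top"
proof -
  have "((\<lambda>x. Re (cayley x)) \<longlongrightarrow> -1) at_top" unfolding Re_cayley by real_asymp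
  moreover have "((\<lambda>x. Im (cayley x)) \<longlongrightarrow> 0) at_top" unfolding Im_cayley by real_asymp
  ultimately show ?thesis by (simp add: tendsto_complex_iff)
qed

lemma cayley_tendsto_at_bot: "(cayley \<longlongrightarrow> -1) at_bot"
proof -
  have "((\<lambda>x. Re (cayley x)) \<longlongrightarrow> -1) at_bot" unfolding Re_cayley by real_asymp
  moreover have "((\<lambda>x. Im (cayley x)) \<longlongrightarrow> 0) at_bot" unfolding Im_cayley by real_asymp
  ultimately show ?thesis by (simp add: tendsto_complex_iff)
qed

lemma has_vector_derivative_comp_cayley:
  assumes "(R has_field_derivative R') (at (cayley x))"
  shows "((\<lambda>x. R (cayley x)) has_vector_derivative R' * (2 * \<i> * cayley x / (1 + x\<^sup>2))) (at x)"
proof -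
  define C where "C = (\<lambda>z::complex. (1 + \<i> * z) / (1 - \<i> * z))"
  have cayley_C: "cayley x = C (of_real x)" for x by (simp add: cayley_def C_def)
  have dC: "(C has_field_derivative 2 * \<i> / (1 - \<i> * of_real x)\<^sup>2) (at (of_real x))"
    unfolding C_def using one_minus_i_real_nonzero[of x]
    by (auto intro!: derivative_eq_intros simp: field_simps power2_eq_square)
  have "((\<lambda>z. R (C z)) has_field_derivative R' * (2 * \<i> / (1 - \<i> * of_real x)\<^sup>2)) (at (of_real x))"
    using DERIV_chain2[OF assms[unfolded cayley_C] dC] by simp
  from has_vector_derivative_real_field[OF this]
  have "((\<lambda>x. R (cayley x)) has_vector_derivative R' * (2 * \<i> / (1 - \<i> * of_real x)\<^sup>2)) (at x)"
    by (simp add: cayley_C)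
  moreover have "2 * \<i> / (1 - \<i> * complex_of_real x)\<^sup>2 = 2 * \<i> * cayley x / (1 + (complex_of_real x)\<^sup>2)"
  proof -
    have factor: "1 + (complex_of_real x)\<^sup>2 = (1 - \<i> * of_real x) * (1 + \<i> * of_real x)"
      by (simp add: algebra_simps power2_eq_square)
    have "\<And>a b::complex. a \<noteq> 0 \<Longrightarrow> b \<noteq> 0 \<Longrightarrow> 2 * \<i> / a\<^sup>2 = 2 * \<i> * (b / a) / (a * b)"
      by (simp add: field_simps power2_eq_square)
    from this[OF one_minus_i_real_nonzero one_plus_i_real_nonzero]
    show ?thesis unfolding factor cayley_def .
  qed
  ultimately show ?thesis by simp
qed

lemma has_real_derivative_Re_comp_cayley:
  assumes "(R has_field_derivative R') (at (cayley x))"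
  shows "((\<lambda>x. Re (R (cayley x))) has_real_derivative
            Re (R' * (2 * \<i> * cayley x)) / (1 + x\<^sup>2)) (at x)"
proof -
  have "Re (R' * (2 * \<i> * cayley x / complex_of_real (1 + x\<^sup>2))) =
        Re (R' * (2 * \<i> * cayley x)) / (1 + x\<^sup>2)"
    by (metis Re_divide_of_real times_divide_eq_right)
  thus ?thesis
    using has_field_derivative_Re[OF has_vector_derivative_comp_cayley[OF assms]] by simp
qed

lemma wC1_bounded_Re_comp_cayley:
  assumes d: "\<And>w. cmod w = 1 \<Longrightarrow> (R has_field_derivative R' w) (at w)"
    and bR: "\<And>w. cmod w = 1 \<Longrightarrow> cmod (R w) \<le> B"
    and bR': "\<And>w. cmod w = 1 \<Longrightarrow> 2 * cmod (R' w) \<le> B"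
  shows "wC1_bounded B (\<lambda>x. Re (R (cayley x)))"
  unfolding wC1_bounded_def
proof (intro exI[of _ "\<lambda>x. Re (R' (cayley x) * (2 * \<i> * cayley x)) / (1 + x\<^sup>2)"] conjI allI)
  fix x
  show "((\<lambda>x. Re (R (cayley x))) has_real_derivative
          Re (R' (cayley x) * (2 * \<i> * cayley x)) / (1 + x\<^sup>2)) (at x)"
    by (rule has_real_derivative_Re_comp_cayley[OF d[OF norm_cayley]])
  show "\<bar>Re (R (cayley x))\<bar> \<le> B"
    using abs_Re_le_cmod bR[OF norm_cayley] order_trans by blast
  have "(1 + x\<^sup>2) * \<bar>Re (R' (cayley x) * (2 * \<i> * cayley x)) / (1 + x\<^sup>2)\<bar> =
        \<bar>Re (R' (cayley x) * (2 * \<i> * cayley x))\<bar>"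
    using one_add_square_pos[of x] by simp
  also have "\<dots> \<le> cmod (R' (cayley x) * (2 * \<i> * cayley x))" by (rule abs_Re_le_cmod)
  also have "\<dots> \<le> B" using bR'[OF norm_cayley[of x]] by (simp add: norm_mult)
  finally show "(1 + x\<^sup>2) * \<bar>Re (R' (cayley x) * (2 * \<i> * cayley x)) / (1 + x\<^sup>2)\<bar> \<le> B" .
qed

section \<open>Trigonometric polynomials on the unit circle\<close>

inductive trig_poly :: "(complex \<Rightarrow> real) \<Rightarrow> bool" where
  monomial: "trig_poly (\<lambda>w. Re (a * w ^ k))"
| add: "trig_poly f \<Longrightarrow> trig_poly g \<Longrightarrow> trig_poly (\<lambda>w. f w + g w)"

lemma trig_poly_continuous_on: "trig_poly g \<Longrightarrow> continuous_on S g"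
  by (induction rule: trig_poly.induct) (auto intro!: continuous_intros)

lemma trig_poly_const: "trig_poly (\<lambda>w. c)"
  using trig_poly.monomial[of "complex_of_real c" 0] by simp

lemma cnj_unit: "cmod w = 1 \<Longrightarrow> w * cnj w = 1"
  using complex_norm_square[of w] by simp

lemma Re_monomial_mult:
  assumes w: "cmod w = 1"
  shows "Re (a * w ^ k) * Re (b * w ^ l) =
    Re ((a * b / 2) * w ^ (k + l)) +
    Re ((if l \<le> k then a * cnj b / 2 else cnj a * b / 2) * w ^ (if l \<le> k then k - l else l - k))"
proof -
  have wc: "w * cnj w = 1" by (rule cnj_unit[OF w])
  have half: "Re ((z / 2) * y) = Re (z * y) / 2" for z y :: complex
    by (metis Re_divide_numeral times_divide_eq_left)
  have Re_prod: "Re A * Re B = (Re (A * B) + Re (A * cnj B)) / 2" for A B :: complex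
    by simp
  have "Re (a * w ^ k) * Re (b * w ^ l) =
        (Re (a * b * w ^ (k + l)) + Re (a * cnj b * (w ^ k * cnj w ^ l))) / 2"
    by (subst Re_prod) (simp add: power_add mult_ac)
  moreover have "Re (a * cnj b * (w ^ k * cnj w ^ l)) =
      Re ((if l \<le> k then a * cnj b else cnj a * b) * w ^ (if l \<le> k then k - l else l - k))"
  proof (cases "l \<le> k")
    case True
    have "w ^ k * cnj w ^ l = w ^ (k - l) * (w * cnj w) ^ l"
      using True by (simp add: power_mult_distrib power_add[symmetric])
    thus ?thesis using True wc by simp
  next
    case False
    have "w ^ k * cnj w ^ l = cnj w ^ (l - k) * (w * cnj w) ^ k"
      using False by (simp add: power_mult_distrib power_add[symmetric] mult.commute)
    hence "a * cnj b * (w ^ k * cnj w ^ l) = cnj (cnj a * b * w ^ (l - k))"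
      using wc by simp
    thus ?thesis using False by (metis cnj.sel(1))
  qed
  ultimately show ?thesis
    by (cases "l \<le> k") (simp_all add: half add_divide_distrib)
qed

lemma trig_poly_mult_monomial:
  assumes "trig_poly g"
  shows "\<exists>h. trig_poly h \<and> (\<forall>w. cmod w = 1 \<longrightarrow> Re (a * w ^ k) * g w = h w)"
  using assms
proof (induction rule: trig_poly.induct)
  case (monomial b l)
  show ?case
    by (rule exI, rule conjI[OF trig_poly.add[OF trig_poly.monomial trig_poly.monomial]])
       (intro allI impI, rule Re_monomial_mult)
next
  case (add f g)
  then obtain h1 h2 where "trig_poly h1" "\<forall>w. cmod w = 1 \<longrightarrow> Re (a * w ^ k) * f w = h1 w"
    "trig_poly h2" "\<forall>w. cmod w = 1 \<longrightarrow> Re (a * w ^ k) * g w = h2 w" by blast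
  thus ?case
    by (intro exI[of _ "\<lambda>w. h1 w + h2 w"]) (auto intro: trig_poly.add simp: distrib_left)
qed

lemma trig_poly_mult:
  assumes "trig_poly f" "trig_poly g"
  shows "\<exists>h. trig_poly h \<and> (\<forall>w. cmod w = 1 \<longrightarrow> f w * g w = h w)"
  using assms
proof (induction rule: trig_poly.induct)
  case (monomial a k)
  thus ?case by (rule trig_poly_mult_monomial)
next
  case (add f1 f2)
  then obtain h1 h2 where "trig_poly h1" "\<forall>w. cmod w = 1 \<longrightarrow> f1 w * g w = h1 w"
    "trig_poly h2" "\<forall>w. cmod w = 1 \<longrightarrow> f2 w * g w = h2 w" by blast
  thus ?case
    by (intro exI[of _ "\<lambda>w. h1 w + h2 w"]) (auto intro: trig_poly.add simp: distrib_right)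
qed

lemma trig_poly_approx:
  assumes U: "continuous_on (sphere 0 1) U" and e: "0 < e"
  shows "\<exists>g. trig_poly g \<and> (\<forall>w\<in>sphere 0 1. \<bar>U w - g w\<bar> < e)"
proof -
  define P where "P = (\<lambda>h. \<exists>g. trig_poly g \<and> (\<forall>w\<in>sphere (0::complex) 1. h w = g w))"
  have "\<exists>g. P g \<and> (\<forall>x\<in>sphere 0 1. \<bar>U x - g x\<bar> < e)"
  proof (rule Stone_Weierstrass_HOL[OF compact_sphere _ _ _ _ _ U e])
    show "P (\<lambda>x. c)" for c unfolding P_def using trig_poly_const by blast
    show "continuous_on (sphere 0 1) f" if "P f" for f
      using that unfolding P_def by (metis continuous_on_cong trig_poly_continuous_on)
    show "P (\<lambda>x. f x + g x)" if "P f \<and> P g" for f g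
      using that unfolding P_def by (metis (mono_tags, lifting) trig_poly.add)
    show "P (\<lambda>x. f x * g x)" if "P f \<and> P g" for f g
    proof -
      from that obtain g1 g2 where "trig_poly g1" "\<forall>w\<in>sphere 0 1. f w = g1 w"
        "trig_poly g2" "\<forall>w\<in>sphere 0 1. g w = g2 w" unfolding P_def by blast
      moreover obtain h where "trig_poly h" "\<forall>w. cmod w = 1 \<longrightarrow> g1 w * g2 w = h w"
        using trig_poly_mult[OF \<open>trig_poly g1\<close> \<open>trig_poly g2\<close>] by blast
      ultimately show ?thesis unfolding P_def by (intro exI[of _ h]) auto
    qed
    have Re_P: "P (\<lambda>w. Re (1 * w ^ 1))" and Im_P: "P (\<lambda>w. Re ((- \<i>) * w ^ 1))"
      unfolding P_def using trig_poly.monomial by blast+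
    show "\<exists>f. P f \<and> f x \<noteq> f y" if "x \<in> sphere 0 1 \<and> y \<in> sphere 0 1 \<and> x \<noteq> y" for x y
    proof (cases "Re x = Re y")
      case True
      hence "Im x \<noteq> Im y" using that complex_eq_iff by blast
      thus ?thesis using Im_P by (intro exI[of _ "\<lambda>w. Re ((- \<i>) * w ^ 1)"]) auto
    next
      case False
      thus ?thesis using Re_P by (intro exI[of _ "\<lambda>w. Re (1 * w ^ 1)"]) auto
    qed
  qed
  thus ?thesis unfolding P_def by auto
qed

text \<open>Integration against \<open>dx / (1 + x\<^sup>2)\<close> is integration in the angle on the circle; a trigonometric
  polynomial has a trigonometric primitive once its mean \<open>c\<close> is removed.\<close>
lemma trig_poly_primitive_along_cayley:
  assumes "trig_poly g"
  shows "\<exists>F c. trig_poly F \<and>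
           (\<forall>x. ((\<lambda>x. F (cayley x)) has_real_derivative (g (cayley x) - c) / (1 + x\<^sup>2)) (at x))"
  using assms
proof (induction rule: trig_poly.induct)
  case (monomial a k)
  show ?case
  proof (cases "k = 0")
    case True
    thus ?thesis by (intro exI[of _ "\<lambda>w. 0"] exI[of _ "Re a"]) (auto intro: trig_poly_const)
  next
    case False
    define b where "b = a / (2 * \<i> * of_nat k)"
    have "((\<lambda>x. Re (b * cayley x ^ k)) has_real_derivative
            (Re (a * cayley x ^ k) - 0) / (1 + x\<^sup>2)) (at x)" for x
    proof -
      have d: "((\<lambda>w. b * w ^ k) has_field_derivative b * (of_nat k * cayley x ^ (k - 1))) (at (cayley x))"
        by (auto intro!: derivative_eq_intros)
      have "cayley x ^ (k - 1) * cayley x = cayley x ^ k"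
        using False by (metis power_minus_mult neq0_conv)
      hence "b * (of_nat k * cayley x ^ (k - 1)) * (2 * \<i> * cayley x) = a * cayley x ^ k"
        using False unfolding b_def by (simp add: field_simps)
      thus ?thesis using has_real_derivative_Re_comp_cayley[OF d] by simp
    qed
    thus ?thesis
      by (intro exI[of _ "\<lambda>w. Re (b * w ^ k)"] exI[of _ 0] conjI trig_poly.monomial allI)
  qed
next
  case (add f g)
  then obtain F1 c1 F2 c2 where "trig_poly F1"
    "\<forall>x. ((\<lambda>x. F1 (cayley x)) has_real_derivative (f (cayley x) - c1) / (1 + x\<^sup>2)) (at x)"
    "trig_poly F2"
    "\<forall>x. ((\<lambda>x. F2 (cayley x)) has_real_derivative (g (cayley x) - c2) / (1 + x\<^sup>2)) (at x)"
    by blast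
  thus ?case
    by (intro exI[of _ "\<lambda>w. F1 w + F2 w"] exI[of _ "c1 + c2"])
       (auto intro: trig_poly.add intro!: derivative_eq_intros simp: add_divide_distrib[symmetric])
qed

lemma trig_poly_comp_cayley_tendsto:
  assumes "trig_poly T"
  shows "((\<lambda>x. T (cayley x)) \<longlongrightarrow> T (-1)) at_top" "((\<lambda>x. T (cayley x)) \<longlongrightarrow> T (-1)) at_bot"
proof -
  have "isCont T (-1)"
    using trig_poly_continuous_on[OF assms, of UNIV] by (simp add: continuous_on_eq_continuous_at)
  thus "((\<lambda>x. T (cayley x)) \<longlongrightarrow> T (-1)) at_top" "((\<lambda>x. T (cayley x)) \<longlongrightarrow> T (-1)) at_bot"
    using isCont_tendsto_compose cayley_tendsto_at_top cayley_tendsto_at_bot by blast+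
qed

lemma Re_gt_minus_one_on_circle:
  assumes "cmod w = 1" "w \<noteq> -1" shows "-1 < Re w"
proof -
  have "\<bar>Re w\<bar> \<le> 1" using abs_Re_le_cmod[of w] assms by simp
  moreover have "Re w \<noteq> -1"
  proof
    assume "Re w = -1"
    hence "Im w = 0" using cmod_power2[of w] assms(1) by simp
    thus False using \<open>Re w = -1\<close> assms(2) by (simp add: complex_eq_iff)
  qed
  ultimately show ?thesis by linarith
qed

text \<open>Near \<open>-1\<close> the inverse Cayley transform is large: \<open>cayley_inv w\<^sup>2 = (2 - s) / s\<close> for
  \<open>s = 1 + Re w = \<bar>w + 1\<bar>\<^sup>2 / 2\<close>.\<close>
lemma abs_cayley_inv_gt_near_minus_one:
  assumes w: "cmod w = 1" "w \<noteq> -1" and L0: "0 \<le> L0" and near: "cmod (w + 1) < 1 / (1 + L0)"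
  shows "L0 < \<bar>cayley_inv w\<bar>"
proof -
  have RI: "(Re w)\<^sup>2 + (Im w)\<^sup>2 = 1" using cmod_power2[of w] w(1) by simp
  define s where "s = 1 + Re w"
  have s0: "0 < s" using Re_gt_minus_one_on_circle[OF w] by (simp add: s_def)
  have "(cmod (w + 1))\<^sup>2 = 2 * s"
    using RI by (simp only: cmod_power2) (simp add: s_def power2_eq_square algebra_simps)
  moreover have "(cmod (w + 1))\<^sup>2 < (1 / (1 + L0))\<^sup>2" using near by (simp add: power_strict_mono)
  moreover have "(1 / (1 + L0))\<^sup>2 \<le> 1 / (1 + L0\<^sup>2)"
  proof -
    have "1 + L0\<^sup>2 \<le> (1 + L0)\<^sup>2" using L0 by (simp add: power2_eq_square algebra_simps)
    thus ?thesis by (simp add: power_divide frac_le add_pos_nonneg)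
  qed
  ultimately have "2 * s < 1 / (1 + L0\<^sup>2)" by linarith
  hence "L0\<^sup>2 < (2 - s) / s" using s0 one_add_square_pos[of L0] by (simp add: field_simps)
  moreover have "(cayley_inv w)\<^sup>2 = (2 - s) / s"
  proof -
    have "(Im w)\<^sup>2 = s * (2 - s)" using RI by (simp add: s_def power2_eq_square algebra_simps)
    thus ?thesis using s0 by (simp add: cayley_inv_def s_def[symmetric] power_divide power2_eq_square)
  qed
  ultimately have "L0\<^sup>2 < (cayley_inv w)\<^sup>2" by simp
  thus ?thesis using L0 by (metis abs_of_nonneg power2_abs power_less_imp_less_base abs_ge_zero)
qed

lemma continuous_on_sphere_comp_cayley_inv:
  fixes u :: "real \<Rightarrow> real"
  assumes cu: "continuous_on UNIV u" and z: "\<And>x. L0 < \<bar>x\<bar> \<Longrightarrow> u x = 0" and L0: "0 \<le> L0"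
  shows "continuous_on (sphere 0 1) (\<lambda>w. if w = -1 then 0 else u (cayley_inv w))"
  unfolding continuous_on_eq_continuous_within
proof (intro ballI)
  fix w0 :: complex assume w0: "w0 \<in> sphere 0 1"
  show "continuous (at w0 within sphere 0 1) (\<lambda>w. if w = -1 then 0 else u (cayley_inv w))"
  proof (cases "w0 = -1")
    case True
    have r0: "0 < 1 / (1 + L0)" using L0 by simp
    show ?thesis
    proof (rule continuous_transform_within[OF continuous_const r0 w0])
      fix w assume w: "w \<in> sphere 0 1" "dist w w0 < 1 / (1 + L0)"
      show "0 = (if w = -1 then 0 else u (cayley_inv w))"
        using abs_cayley_inv_gt_near_minus_one[of w L0] w True L0 z by (auto simp: dist_norm)
    qed
  next
    case False
    have "1 + Re w0 \<noteq> 0" using Re_gt_minus_one_on_circle[OF _ False] w0 by simp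
    hence "isCont cayley_inv w0" unfolding cayley_inv_def by (intro continuous_intros) auto
    moreover have "isCont u (cayley_inv w0)" using cu by (simp add: continuous_on_eq_continuous_at)
    ultimately have "isCont (\<lambda>w. u (cayley_inv w)) w0" by (rule isCont_o2)
    hence c: "continuous (at w0 within sphere 0 1) (\<lambda>w. u (cayley_inv w))"
      by (rule continuous_at_imp_continuous_at_within)
    have r0: "0 < dist w0 (-1)" using False by simp
    show ?thesis
    proof (rule continuous_transform_within[OF c r0 w0])
      fix w assume "w \<in> sphere 0 1" "dist w w0 < dist w0 (-1)"
      hence "w \<noteq> -1" by (auto simp: dist_commute)
      thus "u (cayley_inv w) = (if w = -1 then 0 else u (cayley_inv w))" by simp
    qed
  qed
qed

lemma trig_poly_approx_along_cayley:
  fixes u :: "real \<Rightarrow> real"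
  assumes "continuous_on UNIV u" "\<And>x. L0 < \<bar>x\<bar> \<Longrightarrow> u x = 0" "0 \<le> L0" "0 < e"
  obtains g where "trig_poly g" "\<And>x. \<bar>u x - g (cayley x)\<bar> < e"
proof -
  define U where "U = (\<lambda>w. if w = -1 then 0 else u (cayley_inv w))"
  obtain g where "trig_poly g" and gU: "\<And>w. w \<in> sphere 0 1 \<Longrightarrow> \<bar>U w - g w\<bar> < e"
    using trig_poly_approx[OF continuous_on_sphere_comp_cayley_inv[OF assms(1-3)] assms(4)]
    unfolding U_def by blast
  moreover have "\<bar>u x - g (cayley x)\<bar> < e" for x
    using gU[of "cayley x"] cayley_neq_minus_one[of x] by (simp add: U_def)
  ultimately show ?thesis using that by blast
qed

section \<open>Poisson kernels and roots of unity\<close>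

lemma of_real_Im_conv_cnj: "complex_of_real (Im z) = (z - cnj z) / (2 * \<i>)"
  by (simp add: complex_eq_iff)

lemma of_real_Re_conv_cnj: "complex_of_real (Re z) = (z + cnj z) / 2"
  by (simp add: complex_eq_iff)

definition poisson_pole :: "complex \<Rightarrow> complex" where
  "poisson_pole q = \<i> * (1 - cnj q) / (1 + cnj q)"

lemma Im_poisson_pole_pos: assumes "cmod q < 1" shows "0 < Im (poisson_pole q)"
proof -
  obtain a b where q: "q = Complex a b" by (metis complex.collapse)
  have ab: "a\<^sup>2 + b\<^sup>2 < 1" using assms by (simp add: q cmod_def)
  have "a\<^sup>2 < 1" using ab zero_le_power2[of b] by linarith
  hence "\<bar>a\<bar> < 1" by (simp add: abs_square_less_1)
  hence "0 < (1 + a)\<^sup>2" by simp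
  hence pos: "0 < (1 + a)\<^sup>2 + b\<^sup>2" by (simp add: add_pos_nonneg)
  have "Im (poisson_pole q) = (1 - a\<^sup>2 - b\<^sup>2) / ((1 + a)\<^sup>2 + b\<^sup>2)"
    by (simp add: q poisson_pole_def Im_divide power2_eq_square algebra_simps)
  thus ?thesis using ab pos by simp
qed

lemma poisson_kernel_cayley:
  assumes q: "cmod q < 1"
  shows "(1 + x\<^sup>2) * Im (1 / (complex_of_real x - poisson_pole q)) =
         2 * Re (1 / (1 - q * cayley x)) - 1"
proof -
  define C where "C = (1 - \<i> * of_real x) - q * (1 + \<i> * of_real x)"
  have "cmod (q * cayley x) < 1" using q by (simp add: norm_mult)
  hence "1 - q * cayley x \<noteq> 0" by auto
  moreover have C: "C = (1 - \<i> * of_real x) * (1 - q * cayley x)"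
    using one_minus_i_real_nonzero[of x] by (simp add: C_def cayley_def field_simps)
  ultimately have C0: "C \<noteq> 0" using one_minus_i_real_nonzero[of x] by simp
  hence kernel: "1 / (1 - q * cayley x) = (1 - \<i> * of_real x) / C"
    using C one_minus_i_real_nonzero[of x] by simp
  have "1 + cnj q \<noteq> 0"
  proof
    assume "1 + cnj q = 0"
    hence "cmod q = 1" by (metis add_eq_0_iff complex_mod_cnj norm_minus_cancel norm_one)
    thus False using q by simp
  qed
  hence diff: "complex_of_real x - poisson_pole q = - \<i> * cnj C / (1 + cnj q)"
    by (simp add: C_def poisson_pole_def field_simps)
  have pole: "1 / (complex_of_real x - poisson_pole q) = \<i> * (1 + cnj q) / cnj C"
    unfolding diff using C0 \<open>1 + cnj q \<noteq> 0\<close> by (simp add: field_simps)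
  have "complex_of_real ((1 + x\<^sup>2) * Im (1 / (complex_of_real x - poisson_pole q))) =
        (1 + (of_real x)\<^sup>2) * ((1 + cnj q) / (2 * cnj C) + (1 + q) / (2 * C))"
    unfolding pole of_real_mult of_real_Im_conv_cnj using C0 by (simp add: field_simps)
  also have "\<dots> = (1 - \<i> * of_real x) / C + (1 + \<i> * of_real x) / cnj C - 1"
  proof -
    have "(1 + (of_real x)\<^sup>2) * (1 + cnj q) * C + (1 + (of_real x)\<^sup>2) * (1 + q) * cnj C =
          2 * (1 - \<i> * of_real x) * cnj C + 2 * (1 + \<i> * of_real x) * C - 2 * C * cnj C"
      unfolding C_def by (simp add: algebra_simps power2_eq_square)
    thus ?thesis using C0 by (simp add: field_simps) algebra
  qed
  also have "\<dots> = complex_of_real (2 * Re (1 / (1 - q * cayley x)) - 1)"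
    unfolding of_real_diff of_real_mult of_real_Re_conv_cnj kernel by (simp add: ac_simps)
  finally show ?thesis by (simp only: of_real_eq_iff)
qed

definition unit_root :: "nat \<Rightarrow> complex" where "unit_root p = exp (2 * pi * \<i> / of_nat p)"

lemma unit_root_power: "unit_root p ^ n = exp (2 * pi * \<i> * of_nat n / of_nat p)"
  unfolding unit_root_def exp_of_nat_mult[symmetric] by (simp add: field_simps)

lemma norm_unit_root [simp]: "cmod (unit_root p) = 1"
  unfolding unit_root_def by (simp add: norm_exp_eq_Re)

lemma unit_root_power_eq_1_iff: assumes "0 < p" shows "unit_root p ^ s = 1 \<longleftrightarrow> p dvd s"
proof -
  have "unit_root p ^ s = 1 \<longleftrightarrow> (\<exists>n::int. 2 * pi * real s / real p = of_int (2 * n) * pi)"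
    unfolding unit_root_power exp_eq_1 by simp
  also have "\<dots> \<longleftrightarrow> (\<exists>n::int. real s = real p * of_int n)"
    using assms pi_gt_zero by (auto simp: field_simps)
  also have "\<dots> \<longleftrightarrow> p dvd s"
  proof
    assume "\<exists>n::int. real s = real p * of_int n"
    then obtain n :: int where "real s = real p * of_int n" by blast
    hence "int s = int p * n" by (metis of_int_eq_iff of_int_mult of_int_of_nat_eq)
    hence "int p dvd int s" by simp
    thus "p dvd s" by simp
  next
    assume "p dvd s" then obtain k where "s = p * k" by blast
    thus "\<exists>n::int. real s = real p * of_int n" by (intro exI[of _ "int k"]) simp
  qed
  finally show ?thesis .
qed

lemma unit_root_power_self: "0 < p \<Longrightarrow> unit_root p ^ p = 1"
  using unit_root_power_eq_1_iff by simp

lemma sum_unit_root_powers: assumes "0 < p"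
  shows "(\<Sum>j<p. (unit_root p ^ s) ^ j) = (if p dvd s then of_nat p else 0)"
proof (cases "p dvd s")
  case True
  hence "unit_root p ^ s = 1" using unit_root_power_eq_1_iff[OF assms] by simp
  thus ?thesis using True by simp
next
  case False
  hence ne: "unit_root p ^ s \<noteq> 1" using unit_root_power_eq_1_iff[OF assms] by simp
  have "(unit_root p ^ s) ^ p = 1" by (metis unit_root_power_self[OF assms] power_mult mult.commute one_power2 power_one)
  thus ?thesis using False ne by (simp add: sum_gp_strict)
qed

lemma one_div_one_minus_eq_geometric:
  fixes q :: complex assumes "cmod q < 1" "0 < p"
  shows "1 / (1 - q) = (\<Sum>n<p. q ^ n) / (1 - q ^ p)"
proof -
  have q1: "q \<noteq> 1" using assms by auto
  have "cmod (q ^ p) < 1" using assms by (simp add: norm_power power_less_one_iff) 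
  hence "q ^ p \<noteq> 1" by auto
  hence qp0: "1 - q ^ p \<noteq> 0" by simp
  have "(\<Sum>n<p. q ^ n) = (1 - q ^ p) * (1 / (1 - q))" using q1 by (simp add: sum_gp_strict)
  thus ?thesis using nonzero_mult_div_cancel_left[OF qp0, of "1/(1-q)"] by simp
qed

lemma dvd_add_iff_eq_mod_diff:
  fixes p r n :: nat
  assumes "r < p" "n < p"
  shows "p dvd (r + n) \<longleftrightarrow> n = (p - r) mod p"
proof
  assume "p dvd (r + n)"
  then obtain k where k: "r + n = p * k" by blast
  with assms have "k < 2" by (metis add_less_mono mult_2 mult_less_cancel1 mult.commute)
  hence "k = 0 \<or> k = 1" by auto
  thus "n = (p - r) mod p" using k assms by auto
next
  assume "n = (p - r) mod p"
  thus "p dvd (r + n)" using assms by (cases "r = 0") auto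
qed

text \<open>Discrete Fourier analysis of the geometric series: averaging \<open>1 / (1 - \<omega>\<^sup>j z)\<close> against
  \<open>\<omega>\<^sup>j\<^sup>r\<close> picks out the single power \<open>z\<^sup>n\<close> with \<open>n \<equiv> -r (mod p)\<close>.\<close>
lemma sum_unit_root_resolvent:
  fixes z :: complex
  assumes p: "0 < p" and r: "r < p" and z: "cmod z < 1"
  shows "(\<Sum>j<p. unit_root p ^ (j * r) / (1 - unit_root p ^ j * z)) =
         of_nat p * z ^ ((p - r) mod p) / (1 - z ^ p)"
proof -
  let ?\<omega> = "unit_root p"
  have summand: "?\<omega> ^ (j * r) / (1 - ?\<omega> ^ j * z) = (\<Sum>n<p. z ^ n * (?\<omega> ^ (r + n)) ^ j) / (1 - z ^ p)"
    for j
  proof -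
    have "cmod (?\<omega> ^ j * z) < 1" using z by (simp add: norm_mult norm_power)
    moreover have "(?\<omega> ^ j * z) ^ p = z ^ p"
      by (simp add: power_mult_distrib power_mult[symmetric] mult.commute[of j]
          power_mult unit_root_power_self[OF p])
    ultimately have geom: "1 / (1 - ?\<omega> ^ j * z) = (\<Sum>n<p. (?\<omega> ^ j * z) ^ n) / (1 - z ^ p)"
      using one_div_one_minus_eq_geometric[OF _ p] by metis
    have shift: "?\<omega> ^ (j * r) * (?\<omega> ^ j * z) ^ n = z ^ n * (?\<omega> ^ (r + n)) ^ j" for n
      by (simp add: power_mult_distrib power_add power_mult[symmetric] mult.commute mult.left_commute)
    have "?\<omega> ^ (j * r) / (1 - ?\<omega> ^ j * z) = ?\<omega> ^ (j * r) * (1 / (1 - ?\<omega> ^ j * z))"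
      by simp
    also have "\<dots> = (\<Sum>n<p. ?\<omega> ^ (j * r) * (?\<omega> ^ j * z) ^ n) / (1 - z ^ p)"
      unfolding geom by (simp add: sum_distrib_left)
    finally show ?thesis unfolding shift .
  qed
  have "(\<Sum>j<p. ?\<omega> ^ (j * r) / (1 - ?\<omega> ^ j * z)) =
        (\<Sum>n<p. z ^ n * (\<Sum>j<p. (?\<omega> ^ (r + n)) ^ j)) / (1 - z ^ p)"
    unfolding summand sum_divide_distrib[symmetric] sum_distrib_left by (rule arg_cong2[where f = "(/)"], rule sum.swap, rule refl)
  also have "\<dots> = (\<Sum>n<p. if n = (p - r) mod p then z ^ n * of_nat p else 0) / (1 - z ^ p)"
    using sum_unit_root_powers[OF p] dvd_add_iff_eq_mod_diff[OF r]
    by (intro arg_cong2[where f = "(/)"] sum.cong) auto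
  also have "\<dots> = of_nat p * z ^ ((p - r) mod p) / (1 - z ^ p)"
    using p by (simp add: sum.delta' mult.commute)
  finally show ?thesis .
qed

lemma cnj_unit_root_power:
  assumes p: "0 < p" and m: "m \<le> p"
  shows "cnj (unit_root p ^ (j * (p - m))) = unit_root p ^ (j * m)"
proof -
  define z where "z = unit_root p ^ (j * (p - m))"
  define y where "y = unit_root p ^ (j * m)"
  have "j * (p - m) + j * m = p * j" using m by (simp add: diff_mult_distrib2 mult.commute)
  hence "z * y = (unit_root p ^ p) ^ j"
    unfolding z_def y_def by (simp add: power_add[symmetric] power_mult[symmetric])
  hence zy: "z * y = 1" by (simp add: unit_root_power_self[OF p])
  have "cnj z = cnj z * (z * y)" using zy by simp
  also have "\<dots> = (z * cnj z) * y" by (simp add: mult_ac)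
  also have "\<dots> = y" using cnj_unit[of z] by (simp add: z_def norm_power)
  finally show ?thesis by (simp add: z_def y_def)
qed

lemma Re_mult_Re_conv_cnj: "Re u * Re z = Re (u * z + cnj u * z) / 2"
  by (simp add: algebra_simps)

lemma sum_Re_mult_unit_root_powers_eq_0:
  assumes "0 < p" "\<not> p dvd s"
  shows "(\<Sum>j<p. Re (\<mu> * unit_root p ^ (j * s))) = 0"
proof -
  have "Re (\<mu> * (\<Sum>j<p. (unit_root p ^ s) ^ j)) = 0" using sum_unit_root_powers[OF assms(1)] assms(2) by simp
  thus ?thesis by (simp add: sum_distrib_left power_mult[symmetric] mult.commute)
qed

text \<open>The Poisson kernels with poles at \<open>t \<omega>\<^sup>j\<close>, \<open>\<omega>\<close> a primitive \<open>(2m+1)\<close>-st root of unity, and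
  Fourier coefficients \<open>\<omega>\<^sup>-\<^sup>j\<^sup>m\<close> combine to \<open>Re (a w\<^sup>m)\<close> up to an error of order \<open>t\<close>.\<close>
lemma sum_poisson_root_configuration:
  assumes m: "0 < m" and p: "p = 2 * m + 1" and t: "0 < t" "t < 1" and w: "cmod w = 1"
  shows "(\<Sum>j<p. Re (a / (of_nat p * complex_of_real t ^ m) * unit_root p ^ (j * (p - m))) *
            (2 * Re (1 / (1 - complex_of_real t * unit_root p ^ j * w)) - 1))
     = Re (a * w ^ m / (1 - (complex_of_real t * w) ^ p)) +
       Re (cnj a * complex_of_real t * w ^ (m + 1) / (1 - (complex_of_real t * w) ^ p))"
proof -
  define \<mu> where "\<mu> = a / (of_nat p * complex_of_real t ^ m)"
  define z where "z = complex_of_real t * w"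
  define X where "X = (\<lambda>j. 1 / (1 - unit_root p ^ j * z))"
  define S where "S = (\<lambda>r. \<Sum>j<p. unit_root p ^ (j * r) / (1 - unit_root p ^ j * z))"
  have p0: "0 < p" and mp: "m < p" and "(p - m) mod p = m + 1" using p m by auto
  have z1: "cmod z < 1" using t w by (simp add: z_def norm_mult)
  have X: "X j = 1 / (1 - complex_of_real t * unit_root p ^ j * w)" for j
    by (simp add: X_def z_def mult_ac)
  have S1: "S (p - m) = of_nat p * z ^ m / (1 - z ^ p)"
    unfolding S_def using sum_unit_root_resolvent[OF p0 _ z1, of "p - m"] mp m by simp
  have S2: "S m = of_nat p * z ^ (m + 1) / (1 - z ^ p)"
    unfolding S_def using sum_unit_root_resolvent[OF p0 mp z1] \<open>(p - m) mod p = m + 1\<close> by simp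
  have "\<not> p dvd (p - m)" using m mp by (auto dest: dvd_imp_le)
  hence mean_zero: "(\<Sum>j<p. Re (\<mu> * unit_root p ^ (j * (p - m)))) = 0"
    by (rule sum_Re_mult_unit_root_powers_eq_0[OF p0])
  have Re_prod: "Re (\<mu> * unit_root p ^ (j * (p - m))) * Re (X j) =
      Re (\<mu> * (unit_root p ^ (j * (p - m)) * X j) + cnj \<mu> * (unit_root p ^ (j * m) * X j)) / 2" for j
    unfolding Re_mult_Re_conv_cnj complex_cnj_mult cnj_unit_root_power[OF p0 less_imp_le[OF mp]]
    by (simp only: mult.assoc)
  have "(\<Sum>j<p. c j * (2 * r j - 1)) = 2 * (\<Sum>j<p. c j * r j) - (\<Sum>j<p. c j)"
    for c r :: "nat \<Rightarrow> real"
    by (simp add: sum_subtractf sum_distrib_left algebra_simps)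
  from this[of "\<lambda>j. Re (\<mu> * unit_root p ^ (j * (p - m)))" "\<lambda>j. Re (X j)"]
  have "(\<Sum>j<p. Re (\<mu> * unit_root p ^ (j * (p - m))) * (2 * Re (X j) - 1)) =
        2 * (\<Sum>j<p. Re (\<mu> * unit_root p ^ (j * (p - m))) * Re (X j))"
    using mean_zero by linarith
  also have "\<dots> = Re (\<mu> * S (p - m) + cnj \<mu> * S m)"
    unfolding Re_prod sum_divide_distrib[symmetric] Re_sum[symmetric]
    by (simp add: S_def X_def sum.distrib sum_distrib_left sum_distrib_right mult.commute)
  also have "\<dots> = Re (\<mu> * S (p - m)) + Re (cnj \<mu> * S m)" by simp
  also have "\<mu> * S (p - m) = a * w ^ m / (1 - z ^ p)"
    unfolding S1 \<mu>_def z_def using t p0 by (simp add: power_mult_distrib field_simps)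
  also have "cnj \<mu> * S m = cnj a * complex_of_real t * w ^ (m + 1) / (1 - z ^ p)"
    unfolding S2 \<mu>_def z_def using t p0 by (simp add: power_mult_distrib field_simps)
  finally show ?thesis unfolding \<mu>_def X z_def .
qed

section \<open>Approximation by sums of Poisson kernels\<close>

definition poisson_sum :: "(real \<times> complex) list \<Rightarrow> real \<Rightarrow> real" where
  "poisson_sum L x = (\<Sum>(c, \<eta>)\<leftarrow>L. c * Im (1 / (complex_of_real x - \<eta>)))"

definition upper_poles :: "(real \<times> complex) list \<Rightarrow> bool" where
  "upper_poles L \<longleftrightarrow> (\<forall>(c, \<eta>)\<in>set L. 0 < Im \<eta>)"

definition poisson_approximable :: "(complex \<Rightarrow> real) \<Rightarrow> bool" where
  "poisson_approximable F \<longleftrightarrow> (\<forall>\<delta>>0. \<exists>L. upper_poles L \<and>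
      wC1_bounded \<delta> (\<lambda>x. F (cayley x) - (1 + x\<^sup>2) * poisson_sum L x))"

lemma poisson_sum_append: "poisson_sum (L1 @ L2) x = poisson_sum L1 x + poisson_sum L2 x"
  by (simp add: poisson_sum_def)

lemma poisson_sum_map_upt:
  "poisson_sum (map (\<lambda>j. (c j, \<eta> j)) [0..<p]) x = (\<Sum>j<p. c j * Im (1 / (complex_of_real x - \<eta> j)))"
  by (simp add: poisson_sum_def o_def sum_set_upt_conv_sum_list_nat[symmetric] atLeast0LessThan)

lemma poisson_approximable_add:
  assumes "poisson_approximable F" "poisson_approximable G"
  shows "poisson_approximable (\<lambda>w. F w + G w)"
  unfolding poisson_approximable_def
proof (intro allI impI)
  fix \<delta> :: real assume d: "0 < \<delta>"
  obtain L1 where L1: "upper_poles L1"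
    "wC1_bounded (\<delta>/2) (\<lambda>x. F (cayley x) - (1 + x\<^sup>2) * poisson_sum L1 x)"
    using assms(1) d unfolding poisson_approximable_def by (meson half_gt_zero)
  obtain L2 where L2: "upper_poles L2"
    "wC1_bounded (\<delta>/2) (\<lambda>x. G (cayley x) - (1 + x\<^sup>2) * poisson_sum L2 x)"
    using assms(2) d unfolding poisson_approximable_def by (meson half_gt_zero)
  have "wC1_bounded (\<delta>/2 + \<delta>/2)
          (\<lambda>x. F (cayley x) + G (cayley x) - (1 + x\<^sup>2) * poisson_sum (L1 @ L2) x)"
    by (rule wC1_bounded_cong[OF wC1_bounded_add[OF L1(2) L2(2)]])
       (simp add: poisson_sum_append algebra_simps)
  moreover have "upper_poles (L1 @ L2)" using L1 L2 by (auto simp: upper_poles_def)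
  ultimately show "\<exists>L. upper_poles L \<and>
      wC1_bounded \<delta> (\<lambda>x. F (cayley x) + G (cayley x) - (1 + x\<^sup>2) * poisson_sum L x)"
    by auto
qed

lemma poisson_approximable_const: "poisson_approximable (\<lambda>w. Re (a * w ^ 0))"
  unfolding poisson_approximable_def
proof (intro allI impI exI conjI)
  fix \<delta> :: real assume "0 < \<delta>"
  have "(1 + x\<^sup>2) * poisson_sum [(Re a, poisson_pole 0)] x = Re a" for x
    using poisson_kernel_cayley[of 0 x] by (simp add: poisson_sum_def)
  thus "wC1_bounded \<delta> (\<lambda>x. Re (a * cayley x ^ 0) - (1 + x\<^sup>2) * poisson_sum [(Re a, poisson_pole 0)] x)"
    using wC1_bounded_zero[of \<delta>] \<open>0 < \<delta>\<close> by (auto intro: wC1_bounded_cong)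
  show "upper_poles [(Re a, poisson_pole 0)]"
    using Im_poisson_pole_pos[of 0] by (simp add: upper_poles_def)
qed

lemma half_le_norm_one_minus:
  assumes "0 \<le> s" "s \<le> 1/2" "cmod w = 1"
  shows "1/2 \<le> cmod (1 - complex_of_real s * w ^ p)"
proof -
  have "cmod (complex_of_real s * w ^ p) = s" using assms by (simp add: norm_mult norm_power)
  thus ?thesis
    using norm_triangle_ineq[of "1 - complex_of_real s * w ^ p" "complex_of_real s * w ^ p"] assms
    by simp
qed

text \<open>The numerator of the quotient rule for \<open>b w\<^sup>k / (1 - s w\<^sup>p)\<close>.\<close>
lemma norm_monomial_div_deriv_numerator_le:
  assumes s: "0 \<le> s" "s \<le> 1/2" and w: "cmod w = 1"
  shows "cmod (b * (of_nat k * w ^ (k - 1)) * (1 - complex_of_real s * w ^ p) +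
               b * w ^ k * (complex_of_real s * (of_nat p * w ^ (p - 1))))
         \<le> cmod b * (2 * real k + real p)"
proof -
  have pow: "cmod (w ^ n) = 1" for n by (simp add: norm_power w)
  have "cmod (1 - complex_of_real s * w ^ p) \<le> 1 + s"
    using norm_triangle_ineq4[of 1 "complex_of_real s * w ^ p"] s by (simp add: norm_mult pow)
  hence "cmod b * k * cmod (1 - complex_of_real s * w ^ p) \<le> cmod b * k * (1 + s)"
    by (simp add: mult_left_mono)
  moreover have "real k * s \<le> real k" "s * real p \<le> real p"
    using s by (auto intro: mult_left_le mult_left_le_one_le)
  hence "cmod b * (k * (1 + s) + s * p) \<le> cmod b * (2 * real k + real p)"
    by (intro mult_left_mono) (auto simp: algebra_simps)
  moreover have "cmod (b * (of_nat k * w ^ (k - 1)) * (1 - complex_of_real s * w ^ p)) =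
                 cmod b * k * cmod (1 - complex_of_real s * w ^ p)"
    and "cmod (b * w ^ k * (complex_of_real s * (of_nat p * w ^ (p - 1)))) = cmod b * s * p"
    using s by (simp_all add: norm_mult pow)
  ultimately show ?thesis
    using norm_triangle_ineq[of "b * (of_nat k * w ^ (k - 1)) * (1 - complex_of_real s * w ^ p)"
        "b * w ^ k * (complex_of_real s * (of_nat p * w ^ (p - 1)))"]
    by (simp add: algebra_simps)
qed

lemma wC1_bounded_Re_monomial_div:
  assumes s: "0 \<le> s" "s \<le> 1/2"
  shows "wC1_bounded (8 * cmod b * (2 * real k + real p + 1))
           (\<lambda>x. Re (b * cayley x ^ k / (1 - complex_of_real s * cayley x ^ p)))"
proof -
  define g where "g = (\<lambda>w::complex. 1 - complex_of_real s * w ^ p)"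
  define N where "N = (\<lambda>w. b * (of_nat k * w ^ (k - 1)) * g w +
                            b * w ^ k * (complex_of_real s * (of_nat p * w ^ (p - 1))))"
  show ?thesis
  proof (rule wC1_bounded_Re_comp_cayley)
    fix w :: complex assume w: "cmod w = 1"
    have gb: "1/2 \<le> cmod (g w)" unfolding g_def by (rule half_le_norm_one_minus[OF s w])
    hence g0: "g w \<noteq> 0" by auto
    show "((\<lambda>w. b * w ^ k / (1 - complex_of_real s * w ^ p)) has_field_derivative
            N w / (g w * g w)) (at w)"
      using DERIV_divide[OF DERIV_cmult[OF DERIV_power[OF DERIV_ident]]
          DERIV_diff[OF DERIV_const DERIV_cmult[OF DERIV_power[OF DERIV_ident]]] g0[unfolded g_def]]
      by (simp add: N_def g_def)
    have "cmod (b * w ^ k / (1 - complex_of_real s * w ^ p)) = cmod b / cmod (g w)"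
      by (simp add: g_def norm_divide norm_mult norm_power w)
    also have "\<dots> \<le> cmod b / (1/2)" by (rule frac_le[OF _ _ _ gb]) auto
    also have "\<dots> \<le> 8 * cmod b * (2 * real k + real p + 1)"
      using mult_left_mono[of 1 "4 * (2 * real k + real p + 1)" "cmod b"] by (simp add: algebra_simps)
    finally show "cmod (b * w ^ k / (1 - complex_of_real s * w ^ p)) \<le>
                  8 * cmod b * (2 * real k + real p + 1)" .
    have "1/2 * (1/2) \<le> cmod (g w) * cmod (g w)" using gb by (intro mult_mono) auto
    hence "cmod (N w / (g w * g w)) \<le> cmod b * (2 * real k + real p) / (1/2 * (1/2))"
      unfolding norm_divide norm_mult N_def g_def
      by (intro frac_le norm_monomial_div_deriv_numerator_le[OF s w]) (auto simp: g_def)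
    moreover have "cmod b * (2 * real k + real p) \<le> cmod b * (2 * real k + real p + 1)"
      by (intro mult_left_mono) auto
    ultimately show "2 * cmod (N w / (g w * g w)) \<le> 8 * cmod b * (2 * real k + real p + 1)"
      by simp
  qed
qed

definition monomial_poles :: "complex \<Rightarrow> nat \<Rightarrow> real \<Rightarrow> (real \<times> complex) list" where
  "monomial_poles a m t =
     map (\<lambda>j. (Re (a / (of_nat (2 * m + 1) * complex_of_real t ^ m) * unit_root (2 * m + 1) ^ (j * (m + 1))),
               poisson_pole (complex_of_real t * unit_root (2 * m + 1) ^ j)))
       [0..<2 * m + 1]"

lemma upper_poles_monomial_poles:
  assumes "0 \<le> t" "t < 1" shows "upper_poles (monomial_poles a m t)"
  using Im_poisson_pole_pos assms
  by (auto simp: monomial_poles_def upper_poles_def norm_mult norm_power)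

lemma poisson_sum_monomial_poles:
  assumes m: "0 < m" and t: "0 < t" "t < 1"
  shows "(1 + x\<^sup>2) * poisson_sum (monomial_poles a m t) x =
    Re (a * cayley x ^ m / (1 - (complex_of_real t * cayley x) ^ (2 * m + 1))) +
    Re (cnj a * complex_of_real t * cayley x ^ (m + 1) /
        (1 - (complex_of_real t * cayley x) ^ (2 * m + 1)))"
proof -
  let ?p = "2 * m + 1"
  have q: "cmod (complex_of_real t * unit_root ?p ^ j) < 1" for j
    using t by (simp add: norm_mult norm_power)
  define c where "c j = Re (a / (of_nat ?p * complex_of_real t ^ m) * unit_root ?p ^ (j * (m + 1)))"
    for j
  have pm: "?p - m = m + 1" by simp
  have "(1 + x\<^sup>2) * poisson_sum (monomial_poles a m t) x =
        (\<Sum>j<?p. c j * ((1 + x\<^sup>2) * Im (1 / (complex_of_real x -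
                                 poisson_pole (complex_of_real t * unit_root ?p ^ j)))))"
    unfolding monomial_poles_def poisson_sum_map_upt c_def[symmetric]
    by (simp only: sum_distrib_left mult.left_commute)
  also have "\<dots> = (\<Sum>j<?p. c j * (2 * Re (1 / (1 - complex_of_real t * unit_root ?p ^ j * cayley x)) - 1))"
    by (simp only: poisson_kernel_cayley[OF q])
  also have "\<dots> = Re (a * cayley x ^ m / (1 - (complex_of_real t * cayley x) ^ ?p)) +
      Re (cnj a * complex_of_real t * cayley x ^ (m + 1) / (1 - (complex_of_real t * cayley x) ^ ?p))"
    unfolding c_def by (rule sum_poisson_root_configuration[OF m refl t norm_cayley, unfolded pm])
  finally show ?thesis .
qed

lemma monomial_minus_poisson_sum_monomial_poles:
  assumes m: "0 < m" and t: "0 < t" "t \<le> 1/2"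
  shows "Re (a * cayley x ^ m) - (1 + x\<^sup>2) * poisson_sum (monomial_poles a m t) x =
    Re (- (a * complex_of_real (t ^ (2 * m + 1))) * cayley x ^ (m + (2 * m + 1)) /
        (1 - complex_of_real (t ^ (2 * m + 1)) * cayley x ^ (2 * m + 1))) +
    Re (- (cnj a * complex_of_real t) * cayley x ^ (m + 1) /
        (1 - complex_of_real (t ^ (2 * m + 1)) * cayley x ^ (2 * m + 1)))"
proof -
  let ?p = "2 * m + 1"
  let ?s = "complex_of_real (t ^ ?p)"
  let ?d = "1 - ?s * cayley x ^ ?p"
  have "t ^ ?p \<le> t ^ 1" using t by (intro power_decreasing) auto
  hence "t ^ ?p \<le> 1/2" using t by (simp only: power_one_right)
  hence "?d \<noteq> 0" using half_le_norm_one_minus[of "t ^ ?p" "cayley x" ?p] t by auto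
  have "b * z ^ m - b * z ^ m / (1 - c * z ^ n) = - (b * c) * z ^ (m + n) / (1 - c * z ^ n)"
    if "1 - c * z ^ n \<noteq> 0" for b c z :: complex and n
    using that by (simp add: field_simps power_add)
  from this[OF \<open>?d \<noteq> 0\<close>]
  have split: "a * cayley x ^ m - a * cayley x ^ m / ?d = - (a * ?s) * cayley x ^ (m + ?p) / ?d" .
  have tw: "(complex_of_real t * cayley x) ^ ?p = ?s * cayley x ^ ?p"
    by (simp only: power_mult_distrib of_real_power)
  have "t < 1" using t by simp
  have "Re (a * cayley x ^ m) - (1 + x\<^sup>2) * poisson_sum (monomial_poles a m t) x =
        Re (a * cayley x ^ m) - (Re (a * cayley x ^ m / ?d) +
          Re (cnj a * complex_of_real t * cayley x ^ (m + 1) / ?d))"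
    unfolding poisson_sum_monomial_poles[OF m t(1) \<open>t < 1\<close>] tw ..
  hence "Re (a * cayley x ^ m) - (1 + x\<^sup>2) * poisson_sum (monomial_poles a m t) x =
         Re (a * cayley x ^ m - a * cayley x ^ m / ?d) -
         Re (cnj a * complex_of_real t * cayley x ^ (m + 1) / ?d)"
    by simp
  thus ?thesis unfolding split by simp
qed

lemma wC1_bounded_monomial_minus_poisson_sum:
  assumes m: "0 < m" and t: "0 < t" "t \<le> 1/2"
  shows "wC1_bounded (96 * (cmod a + 1) * (real m + 1) * t)
           (\<lambda>x. Re (a * cayley x ^ m) - (1 + x\<^sup>2) * poisson_sum (monomial_poles a m t) x)"
proof -
  let ?p = "2 * m + 1"
  define s where "s = t ^ ?p"
  have s0: "0 \<le> s" using t by (simp add: s_def)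
  have "t ^ ?p \<le> t ^ 1" using t by (intro power_decreasing) auto
  hence st: "s \<le> t" by (simp add: s_def)
  have s1: "s \<le> 1/2" using st t by simp
  have "wC1_bounded (8 * cmod (- (a * complex_of_real s)) * (2 * real (m + ?p) + real ?p + 1) +
                     8 * cmod (- (cnj a * complex_of_real t)) * (2 * real (m + 1) + real ?p + 1))
          (\<lambda>x. Re (a * cayley x ^ m) - (1 + x\<^sup>2) * poisson_sum (monomial_poles a m t) x)"
    by (rule wC1_bounded_cong[OF wC1_bounded_add[OF wC1_bounded_Re_monomial_div[OF s0 s1]
          wC1_bounded_Re_monomial_div[OF s0 s1]]])
       (rule monomial_minus_poisson_sum_monomial_poles[OF m t, folded s_def])
  moreover have "8 * cmod (- (a * complex_of_real s)) * (2 * real (m + ?p) + real ?p + 1) +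
                 8 * cmod (- (cnj a * complex_of_real t)) * (2 * real (m + 1) + real ?p + 1)
                 \<le> 96 * (cmod a + 1) * (real m + 1) * t"
  proof -
    have "cmod (- (a * complex_of_real s)) = cmod a * s"
      and "cmod (- (cnj a * complex_of_real t)) = cmod a * t"
      using s0 t by (simp_all add: norm_mult)
    moreover have "cmod a * s \<le> cmod a * t" using st by (rule mult_left_mono) simp
    ultimately have "8 * cmod (- (a * complex_of_real s)) * (2 * real (m + ?p) + real ?p + 1) +
           8 * cmod (- (cnj a * complex_of_real t)) * (2 * real (m + 1) + real ?p + 1)
           \<le> 8 * (cmod a * t) * (2 * real (m + ?p) + real ?p + 1) +
             8 * (cmod a * t) * (2 * real (m + 1) + real ?p + 1)"
      by (intro add_mono mult_right_mono) auto
    also have "\<dots> = (cmod a * t) * (96 * real m + 64)" by (simp add: algebra_simps)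
    also have "\<dots> \<le> ((cmod a + 1) * t) * (96 * (real m + 1))"
      using t by (intro mult_mono) auto
    finally show ?thesis by (simp add: algebra_simps)
  qed
  ultimately show ?thesis by (rule wC1_bounded_mono)
qed

lemma poisson_approximable_monomial: "poisson_approximable (\<lambda>w. Re (a * w ^ k))"
proof (cases "k = 0")
  case True
  thus ?thesis using poisson_approximable_const by simp
next
  case False
  show ?thesis unfolding poisson_approximable_def
  proof (intro allI impI)
    fix \<delta> :: real assume \<delta>: "0 < \<delta>"
    define Q where "Q = 96 * (cmod a + 1) * (real k + 1)"
    define t where "t = min (1/2) (\<delta> / Q)"
    have Q: "0 < Q" unfolding Q_def by (intro mult_pos_pos) (auto simp: add_nonneg_pos)
    have t0: "0 < t" using \<delta> Q by (simp add: t_def)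
    have t1: "t \<le> 1/2" unfolding t_def by (rule min.cobounded1)
    have "Q * t \<le> \<delta>" using Q by (simp add: t_def min_def field_simps)
    thus "\<exists>L. upper_poles L \<and>
            wC1_bounded \<delta> (\<lambda>x. Re (a * cayley x ^ k) - (1 + x\<^sup>2) * poisson_sum L x)"
      using False t0 t1 upper_poles_monomial_poles[of t a k]
        wC1_bounded_monomial_minus_poisson_sum[of k t a]
      by (intro exI[of _ "monomial_poles a k t"]) (auto simp: Q_def elim: wC1_bounded_mono)
  qed
qed

lemma poisson_approximable_trig_poly: "trig_poly F \<Longrightarrow> poisson_approximable F"
proof (induction rule: trig_poly.induct)
  case (monomial a k)
  show ?case by (rule poisson_approximable_monomial)
next
  case (add f g)
  from add.IH show ?case by (rule poisson_approximable_add)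
qed

section \<open>Compactly supported \<open>C\<^sup>1\<close> functions\<close>

lemma C1c_vanishing_outside:
  assumes "C1c f"
  obtains f' L0 where "\<And>x. (f has_real_derivative f' x) (at x)" "continuous_on UNIV f'" "0 \<le> L0"
    "\<And>x. L0 < \<bar>x\<bar> \<Longrightarrow> f x = 0 \<and> f' x = 0"
proof -
  obtain f' where df: "\<And>x. (f has_real_derivative f' x) (at x)" and cf': "continuous_on UNIV f'"
    using assms unfolding C1c_def C1_differentiable_on_def
    by (auto simp: has_real_derivative_iff_has_vector_derivative)
  have "bounded (closure {x. f x \<noteq> 0})" using assms unfolding C1c_def by (simp add: compact_imp_bounded)
  then obtain L1 where L1: "\<And>x. x \<in> closure {x. f x \<noteq> 0} \<Longrightarrow> norm x \<le> L1" by (auto simp: bounded_iff)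
  define L0 where "L0 = max 0 L1"
  have fz: "f x = 0" if "L0 < \<bar>x\<bar>" for x
    using L1[of x] closure_subset[of "{x. f x \<noteq> 0}"] that by (force simp: L0_def)
  have "f' x = 0" if "L0 < \<bar>x\<bar>" for x
  proof -
    have "open {y::real. L0 < \<bar>y\<bar>}" by (intro open_Collect_less continuous_intros)
    hence "(f has_real_derivative 0) (at x)"
      by (rule has_field_derivative_transform_within_open[OF DERIV_const]) (use that fz in auto)
    thus ?thesis by (rule DERIV_unique[OF df[of x]])
  qed
  with df cf' fz show ?thesis by (intro that[of f' L0]) (auto simp: L0_def)
qed

lemma wC1_bounded_trig_approx:
  fixes K K' :: "real \<Rightarrow> real"
  assumes dK: "\<And>x. (K has_real_derivative K' x) (at x)"
    and cont: "continuous_on UNIV (\<lambda>x. (1 + x\<^sup>2) * K' x)"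
    and L0: "0 \<le> L0" and vanish: "\<And>x. L0 < \<bar>x\<bar> \<Longrightarrow> K x = 0 \<and> K' x = 0"
    and e: "0 < e"
  obtains T where "trig_poly T" "wC1_bounded (8 * e) (\<lambda>x. K x - T (cayley x))"
proof -
  have u0: "(1 + x\<^sup>2) * K' x = 0" if "L0 < \<bar>x\<bar>" for x using vanish[OF that] by simp
  obtain g where g: "trig_poly g" and ug: "\<And>x. \<bar>(1 + x\<^sup>2) * K' x - g (cayley x)\<bar> < e"
    using trig_poly_approx_along_cayley[OF cont u0 L0 e] by blast
  obtain F c where F: "trig_poly F" and dF: "\<And>x. ((\<lambda>x. F (cayley x)) has_real_derivative
                                              (g (cayley x) - c) / (1 + x\<^sup>2)) (at x)"
    using trig_poly_primitive_along_cayley[OF g] by blast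
  define T where "T = (\<lambda>w. F w - F (-1))"
  define \<phi> where "\<phi> = (\<lambda>x. K x - T (cayley x))"
  define \<phi>' where "\<phi>' = (\<lambda>x. K' x - (g (cayley x) - c) / (1 + x\<^sup>2))"
  have T: "trig_poly T"
    using trig_poly.add[OF F trig_poly_const[of "- F (-1)"]] by (simp add: T_def)
  have d\<phi>: "(\<phi> has_real_derivative \<phi>' x) (at x)" for x
    unfolding \<phi>_def \<phi>'_def T_def using dK[of x] dF[of x] by (auto intro!: derivative_eq_intros)
  have weighted: "(1 + x\<^sup>2) * \<phi>' x = ((1 + x\<^sup>2) * K' x - g (cayley x)) + c" for x
    using one_add_square_pos[of x] by (simp add: \<phi>'_def field_simps)
  have "((\<lambda>x. - T (cayley x)) \<longlongrightarrow> 0) at_top" "((\<lambda>x. - T (cayley x)) \<longlongrightarrow> 0) at_bot"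
    using trig_poly_comp_cayley_tendsto[OF T] tendsto_minus by (force simp: T_def)+
  moreover have "eventually (\<lambda>x. - T (cayley x) = \<phi> x) at_top"
    using eventually_gt_at_top[of L0] by eventually_elim (use vanish L0 in \<open>simp add: \<phi>_def\<close>)
  moreover have "eventually (\<lambda>x. - T (cayley x) = \<phi> x) at_bot"
    using eventually_gt_at_bot[of "- L0"] by eventually_elim (use vanish L0 in \<open>simp add: \<phi>_def\<close>)
  ultimately have lt: "(\<phi> \<longlongrightarrow> 0) at_top" and lb: "(\<phi> \<longlongrightarrow> 0) at_bot"
    by (auto intro: Lim_transform_eventually)
  have "\<bar>c\<bar> \<le> e"
  proof (rule abs_le_if_weighted_deriv_near[OF d\<phi> _ lt lb])
    show "\<bar>(1 + x\<^sup>2) * \<phi>' x - c\<bar> \<le> e" for x using ug[of x] unfolding weighted by simp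
  qed
  have b\<phi>': "(1 + x\<^sup>2) * \<bar>\<phi>' x\<bar> \<le> 2 * e" for x
  proof -
    have "(1 + x\<^sup>2) * \<bar>\<phi>' x\<bar> = \<bar>((1 + x\<^sup>2) * K' x - g (cayley x)) + c\<bar>"
      unfolding weighted[symmetric] abs_mult abs_of_pos[OF one_add_square_pos] ..
    thus ?thesis
      using ug[of x] \<open>\<bar>c\<bar> \<le> e\<close> abs_triangle_ineq[of "(1 + x\<^sup>2) * K' x - g (cayley x)" c]
      by linarith
  qed
  have "wC1_bounded (4 * (2 * e)) \<phi>" by (rule wC1_bounded_if_weighted_deriv_le[OF d\<phi> b\<phi>' lt])
  with T show ?thesis unfolding \<phi>_def by (intro that) auto
qed

lemma C1c_weighted_trig_approx:
  assumes "C1c f" "0 < e"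
  obtains T where "trig_poly T" "wC1_bounded (8 * e) (\<lambda>x. (1 + x\<^sup>2) * f x - T (cayley x))"
proof -
  obtain f' L0 where df: "\<And>x. (f has_real_derivative f' x) (at x)" and cf': "continuous_on UNIV f'"
    and L0: "0 \<le> L0" and vanish: "\<And>x. L0 < \<bar>x\<bar> \<Longrightarrow> f x = 0 \<and> f' x = 0"
    using C1c_vanishing_outside[OF assms(1)] by blast
  define K' where "K' = (\<lambda>x. 2 * x * f x + (1 + x\<^sup>2) * f' x)"
  have dK: "((\<lambda>x. (1 + x\<^sup>2) * f x) has_real_derivative K' x) (at x)" for x
    unfolding K'_def using df[of x] by (auto intro!: derivative_eq_intros simp: power2_eq_square)
  have "continuous_on UNIV f" using df by (meson DERIV_isCont continuous_at_imp_continuous_on)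
  hence cont: "continuous_on UNIV (\<lambda>x. (1 + x\<^sup>2) * K' x)"
    unfolding K'_def using cf' by (intro continuous_intros) auto
  have vanishK: "(1 + x\<^sup>2) * f x = 0 \<and> K' x = 0" if "L0 < \<bar>x\<bar>" for x
    using vanish[OF that] by (simp add: K'_def)
  show ?thesis using wC1_bounded_trig_approx[OF dK cont L0 vanishK assms(2)] that by blast
qed

lemma indexed_form_of_poisson_sum:
  assumes "upper_poles L" "P (poisson_sum L)"
  shows "\<exists>(N::nat) (c::nat \<Rightarrow> real) (\<eta>::nat \<Rightarrow> complex). (\<forall>j\<in>{1..N}. Im (\<eta> j) > 0) \<and>
           P (\<lambda>x. \<Sum>j=1..N. c j * Im (1 / (complex_of_real x - \<eta> j)))"
proof (intro exI conjI)
  let ?c = "\<lambda>j. fst (L ! (j - 1))" and ?\<eta> = "\<lambda>j. snd (L ! (j - 1))"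
  show "\<forall>j\<in>{1..length L}. Im (?\<eta> j) > 0"
  proof
    fix j assume "j \<in> {1..length L}"
    hence "L ! (j - 1) \<in> set L" by (intro nth_mem) auto
    thus "Im (?\<eta> j) > 0" using assms(1) by (auto simp: upper_poles_def)
  qed
  have "poisson_sum L x = (\<Sum>j=1..length L. ?c j * Im (1 / (complex_of_real x - ?\<eta> j)))" for x
  proof -
    have "poisson_sum L x = (\<Sum>i<length L. ?c (Suc i) * Im (1 / (complex_of_real x - ?\<eta> (Suc i))))"
      unfolding poisson_sum_def by (subst sum_list_sum_nth) (simp add: atLeast0LessThan case_prod_beta)
    also have "\<dots> = (\<Sum>j=Suc 0..length L. ?c j * Im (1 / (complex_of_real x - ?\<eta> j)))"
      by (subst sum.atLeast1_atMost_eq) simp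
    finally show ?thesis by simp
  qed
  with assms(2) show "P (\<lambda>x. \<Sum>j=1..length L. ?c j * Im (1 / (complex_of_real x - ?\<eta> j)))"
    by (metis (no_types, lifting) ext)
qed

theorem lemma5p3:
  fixes f :: "real \<Rightarrow> real" and \<epsilon> :: real
  assumes "C1c f" and "\<epsilon> > 0"
  shows "\<exists>(N::nat) (c::nat \<Rightarrow> real) (\<eta>::nat \<Rightarrow> complex).
           (\<forall>j\<in>{1..N}. Im (\<eta> j) > 0) \<and>
           Lw_norm (\<lambda>x. f x - (\<Sum>j=1..N. c j * Im (1 / (complex_of_real x - \<eta> j))))
             < ereal \<epsilon>"
proof -
  define e where "e = \<epsilon> / 72"
  have e: "0 < e" using assms(2) by (simp add: e_def)
  obtain T where T: "trig_poly T" "wC1_bounded (8 * e) (\<lambda>x. (1 + x\<^sup>2) * f x - T (cayley x))"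
    using C1c_weighted_trig_approx[OF assms(1) e] by blast
  obtain L where L: "upper_poles L" "wC1_bounded e (\<lambda>x. T (cayley x) - (1 + x\<^sup>2) * poisson_sum L x)"
    using poisson_approximable_trig_poly[OF T(1)] e unfolding poisson_approximable_def by blast
  have "wC1_bounded (8 * e + e) (\<lambda>x. (1 + x\<^sup>2) * (f x - poisson_sum L x))"
    by (rule wC1_bounded_cong[OF wC1_bounded_add[OF T(2) L(2)]]) (simp add: algebra_simps)
  hence "Lw_norm (\<lambda>x. f x - poisson_sum L x) \<le> ereal (4 * (8 * e + e))"
    by (rule Lw_norm_le_if_wC1_bounded_weighted)
  also have "\<dots> < ereal \<epsilon>" using assms(2) by (simp add: e_def)
  finally show ?thesis
    using indexed_form_of_poisson_sum[OF L(1), of "\<lambda>g. Lw_norm (\<lambda>x. f x - g x) < ereal \<epsilon>"] by simp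
qed

end
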